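(* Let $n\ge2$ be an integer, $t\in(0,1/2]$ and $\lambda>0$. Then $$\big(t+(1-t)\lambda^{1-n}\big)\big(t+(1-t)\lambda\big)^{n-1}-1\ge\frac{t}{8}\log^2(\lambda).$$ *)

theory Defs
  imports Complex_Main
begin

end

theory Submission
  imports Defs "HOL-Analysis.Analysis"
begin

text \<open>
  Put \<open>m = n - 1\<close>, \<open>A = t + (1 - t) l\<close> and \<open>q = A / l = (1 - t) + t / l\<close>. The left-hand
  product equals \<open>t A\<^sup>m + (1 - t) q\<^sup>m\<close>, which by convexity of \<open>x\<^sup>m\<close> is at least
  \<open>(t A + (1 - t) q)\<^sup>m = (1 + c)\<^sup>m \<ge> 1 + c\<close> with \<open>c = t (1 - t) (l + 1/l - 2)\<close>.
  Finally \<open>l + 1/l - 2 = 4 sinh\<^sup>2(ln l / 2) \<ge> (ln l)\<^sup>2\<close> and \<open>1 - t \<ge> 1/2\<close>.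
\<close>

lemma convex_on_power_nonneg: "convex_on {0::real..} (\<lambda>x. x ^ n)"
  by (cases "even n")
     (auto intro: convex_on_subset[OF convex_power_even] convex_power_odd)

lemma ln_squared_le:
  fixes l :: real
  assumes "l > 0"
  shows "(ln l)\<^sup>2 \<le> l + 1 / l - 2"
proof -
  define y where "y = ln l / 2"
  have l_eq: "exp y * exp y = l"
    using assms by (simp add: y_def flip: exp_add)
  have "\<bar>y\<bar> \<le> \<bar>(exp y - inverse (exp y)) / 2\<bar>"
    by (rule real_le_abs_sinh)
  then have "y\<^sup>2 \<le> ((exp y - inverse (exp y)) / 2)\<^sup>2"
    by (metis abs_ge_zero power2_abs power_mono)
  also have "\<dots> = (exp y * exp y + 1 / (exp y * exp y) - 2) / 4"
    by (simp add: field_simps power2_eq_square)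
  finally show ?thesis
    using l_eq by (simp add: y_def power_divide)
qed

lemma mixture_power_ge:
  fixes t l :: real and m :: nat
  assumes "0 \<le> t" "t \<le> 1" "l > 0" "m \<ge> 1"
  shows "(t + (1 - t) / l ^ m) * (t + (1 - t) * l) ^ m \<ge> 1 + t * (1 - t) * (l + 1 / l - 2)"
proof -
  define A where "A = t + (1 - t) * l"
  define q where "q = A / l"
  define c where "c = t * (1 - t) * (l + 1 / l - 2)"
  have "A > 0"
    using assms by (cases "t = 0") (auto simp: A_def intro: add_pos_nonneg)
  then have "q > 0"
    using assms by (simp add: q_def)
  have "0 \<le> l + 1 / l - 2"
    using ln_squared_le[OF \<open>l > 0\<close>] by (meson order_trans zero_le_power2)
  then have "c \<ge> 0"
    using assms by (simp add: c_def)
  have mean: "t * A + (1 - t) * q = 1 + c"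
    using assms by (simp add: A_def q_def c_def field_simps)
  have "1 + c \<le> (1 + c) ^ m"
    using power_increasing[of 1 m "1 + c"] \<open>c \<ge> 0\<close> assms by simp
  also have "\<dots> \<le> t * A ^ m + (1 - t) * q ^ m"
    using convex_onD[OF convex_on_power_nonneg, of t q A] assms \<open>A > 0\<close> \<open>q > 0\<close> mean
    by (simp add: add.commute)
  also have "\<dots> = (t + (1 - t) / l ^ m) * A ^ m"
    using assms by (simp add: q_def field_simps)
  finally show ?thesis
    by (simp add: A_def c_def)
qed

theorem mainTheorem16:
  fixes n :: nat and t l :: real
  assumes "n \<ge> 2" and "0 < t" and "t \<le> 1/2" and "l > 0"
  shows "(t + (1 - t) * l powr (1 - real n)) * (t + (1 - t) * l) ^ (n - 1) - 1
           \<ge> t / 8 * (ln l)^2"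
proof -
  have "1 - real n = - real (n - 1)"
    using assms by simp
  then have powr_eq: "l powr (1 - real n) = 1 / l ^ (n - 1)"
    using assms by (simp only: powr_minus_divide powr_realpow)
  have "t / 8 * (ln l)\<^sup>2 \<le> t * (1 - t) * (ln l)\<^sup>2"
    using assms by (intro mult_right_mono) auto
  also have "\<dots> \<le> t * (1 - t) * (l + 1 / l - 2)"
    using assms ln_squared_le[OF \<open>l > 0\<close>] by (intro mult_left_mono) auto
  also have "\<dots> \<le> (t + (1 - t) / l ^ (n - 1)) * (t + (1 - t) * l) ^ (n - 1) - 1"
    using mixture_power_ge[of t l "n - 1"] assms by fastforce
  finally show ?thesis
    by (simp add: powr_eq)
qed

end
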